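(* Let $M$ be an $n\times n$ Hermitian positive semidefinite matrix which is irreducible. If the argument of each non-zero off-diagonal entry of $-M$ lies in $\left(-\frac{\pi}{2^n},\frac{\pi}{2^n}\right)$, then $\operatorname{rank}(M)\ge n-1$.
   Context: A square matrix is irreducible if it cannot be brought into block-diagonal form (with at least two diagonal blocks) by a simultaneous permutation of its rows and columns. *)

theory Defs
  imports "HOL-Analysis.Analysis"
begin

definition hermitian_mat :: "complex^'n^'n \<Rightarrow> bool" where
  "hermitian_mat M \<longleftrightarrow> (\<forall>i j. M $ i $ j = cnj (M $ j $ i))"

definition psd_mat :: "complex^'n^'n \<Rightarrow> bool" where
  "psd_mat M \<longleftrightarrow> hermitian_mat M \<and>
     (\<forall>x :: complex^'n. (\<Sum>i\<in>UNIV. \<Sum>j\<in>UNIV. cnj (x $ i) * M $ i $ j * x $ j) \<in> \<real> \<and>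
                       0 \<le> Re (\<Sum>i\<in>UNIV. \<Sum>j\<in>UNIV. cnj (x $ i) * M $ i $ j * x $ j))"

text \<open>A matrix is reducible if some simultaneous permutation of rows and columns
  (an enumeration tau of the index set by positions 0..n-1) brings it into
  block-diagonal form with m >= 2 diagonal blocks: blk assigns to each position
  its block number, monotonically, using all blocks 0..m-1, and all entries
  between positions in different blocks vanish.\<close>
definition reducible_mat :: "'a::zero^'n^'n \<Rightarrow> bool" where
  "reducible_mat M \<longleftrightarrow>
     (\<exists>(tau :: nat \<Rightarrow> 'n) (blk :: nat \<Rightarrow> nat) (m :: nat).
        bij_betw tau {0..<CARD('n)} UNIV \<and> 2 \<le> m \<and>
        (\<forall>p q. p \<le> q \<and> q < CARD('n) \<longrightarrow> blk p \<le> blk q) \<and>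
        blk ` {0..<CARD('n)} = {0..<m} \<and>
        (\<forall>p q. p < CARD('n) \<and> q < CARD('n) \<and> blk p \<noteq> blk q \<longrightarrow> M $ tau p $ tau q = 0))"

definition irreducible_mat :: "'a::zero^'n^'n \<Rightarrow> bool" where
  "irreducible_mat M \<longleftrightarrow> \<not> reducible_mat M"

end

theory Submission
  imports Defs
begin

text \<open>Pick an index \<open>k\<close> and pass to the Schur complement
  \<open>M\<^sub>i\<^sub>j - M\<^sub>i\<^sub>k M\<^sub>k\<^sub>j / M\<^sub>k\<^sub>k\<close> on the remaining indices.
  Irreducibility gives a nonzero entry in row \<open>k\<close>, so positive semidefiniteness forces
  \<open>M\<^sub>k\<^sub>k > 0\<close>; the complement is again positive semidefinite and every kernel vector
  of \<open>M\<close> restricts to one of the complement, determined by this restriction.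
  If the negated off-diagonal entries lie in the sector \<open>|arg z| < \<theta>\<close> with \<open>2\<theta> \<le> \<pi>/2\<close>,
  then the two summands of \<open>-M\<^sub>i\<^sub>j + (-M\<^sub>i\<^sub>k)(-M\<^sub>k\<^sub>j)/M\<^sub>k\<^sub>k\<close> lie in the
  sector of angle \<open>2\<theta>\<close> inside the open right half plane, so they cannot cancel: the complement
  satisfies the sector condition with \<open>2\<theta>\<close> and is still irreducible. Starting from
  \<open>\<theta> = \<pi>/2\<^sup>n\<close>, the eliminations can be repeated down to a single index, so any two kernel
  vectors are linearly dependent; for a Hermitian matrix this means rank at least \<open>n - 1\<close>.\<close>

section \<open>Sectors of the complex plane\<close>

definition sector :: "real \<Rightarrow> complex \<Rightarrow> bool" where
  "sector t z \<longleftrightarrow> z = 0 \<or> \<bar>Arg z\<bar> < t"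

lemma Arg_in_sector_iff_Im:
  assumes "0 < t" "t \<le> pi/2" "z \<noteq> 0"
  shows "\<bar>Arg z\<bar> < t \<longleftrightarrow> 0 < Im (z * cis t) \<and> Im (z * cis (-t)) < 0"
proof -
  define r where "r = cmod z"
  define \<theta> where "\<theta> = Arg z"
  have "r > 0" using assms by (simp add: r_def)
  have z: "z = rcis r \<theta>" unfolding r_def \<theta>_def by (simp add: rcis_cmod_Arg)
  have \<theta>: "-pi < \<theta>" "\<theta> \<le> pi" using Arg_bounded \<theta>_def by auto
  have "Im (z * cis t) = r * sin (\<theta> + t)" "Im (z * cis (-t)) = r * sin (\<theta> - t)" unfolding z
    by (simp_all add: rcis_def cis_mult sin_add sin_diff algebra_simps)
  moreover have "\<bar>\<theta>\<bar> < t \<longleftrightarrow> 0 < sin (\<theta> + t) \<and> sin (\<theta> - t) < 0"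
  proof
    assume "\<bar>\<theta>\<bar> < t"
    then have "0 < sin (\<theta> + t)" "0 < sin (t - \<theta>)"
      using assms \<theta> by (auto intro!: sin_gt_zero)
    then show "0 < sin (\<theta> + t) \<and> sin (\<theta> - t) < 0"
      by (metis minus_diff_eq neg_less_0_iff_less sin_minus)
  next
    assume sin: "0 < sin (\<theta> + t) \<and> sin (\<theta> - t) < 0"
    have "\<not> \<theta> + t \<le> 0"
      using sin sin_ge_zero[of "-(\<theta> + t)"] \<theta> assms by (auto simp del: minus_add_distrib)
    moreover have "\<not> t \<le> \<theta>"
      using sin sin_ge_zero[of "\<theta> - t"] \<theta> assms by auto
    ultimately show "\<bar>\<theta>\<bar> < t" by auto
  qed
  ultimately show ?thesis
    using \<open>r > 0\<close> by (simp add: \<theta>_def zero_less_mult_iff mult_less_0_iff)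
qed

lemma sector_add_nonzero:
  assumes "0 < t" "t \<le> pi/2" "sector t z" "sector t w" "z \<noteq> 0"
  shows "z + w \<noteq> 0 \<and> \<bar>Arg (z + w)\<bar> < t"
proof -
  have "0 < Im (z * cis t) \<and> Im (z * cis (-t)) < 0"
    using Arg_in_sector_iff_Im assms by (simp add: sector_def)
  moreover have "0 \<le> Im (w * cis t) \<and> Im (w * cis (-t)) \<le> 0"
    using Arg_in_sector_iff_Im[of t w] assms by (cases "w = 0") (auto simp: sector_def)
  ultimately have Im: "0 < Im ((z + w) * cis t) \<and> Im ((z + w) * cis (-t)) < 0"
    by (simp add: distrib_right del: cis.sel)
  then have "z + w \<noteq> 0" by (metis Im_complex_of_real mult_zero_left of_real_0 order.irrefl)
  with Im show ?thesis using Arg_in_sector_iff_Im assms(1,2) by blast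
qed

lemma sector_add:
  assumes "0 < t" "t \<le> pi/2" "sector t z" "sector t w"
  shows "sector t (z + w)"
  using sector_add_nonzero[OF assms] sector_add_nonzero[OF assms(1,2,4,3)]
  unfolding sector_def by (cases "z = 0"; cases "w = 0") (auto simp: add.commute)

lemma sector_add_eq_0_iff:
  assumes "0 < t" "t \<le> pi/2" "sector t z" "sector t w"
  shows "z + w = 0 \<longleftrightarrow> z = 0 \<and> w = 0"
  using sector_add_nonzero[OF assms] sector_add_nonzero[OF assms(1,2,4,3)]
  by (auto simp: add.commute)

lemma sector_mult:
  assumes "t \<le> pi/2" "sector t z" "sector t w"
  shows "sector (2 * t) (z * w)"
proof (cases "z = 0 \<or> w = 0")
  case False
  then have "\<bar>Arg z\<bar> < t" "\<bar>Arg w\<bar> < t" using assms by (auto simp: sector_def)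
  moreover have "Arg (z * w) = Arg z + Arg w"
    by (rule Arg_times) (use calculation assms False in auto)
  ultimately show ?thesis by (simp add: sector_def abs_less_iff)
qed (auto simp: sector_def)

lemma sector_divide_pos:
  assumes "sector t z" "0 < r"
  shows "sector t (z / of_real r)"
  using assms by (auto simp: sector_def)

lemma sector_mono:
  assumes "sector t z" "t \<le> t'"
  shows "sector t' z"
  using assms by (auto simp: sector_def)

section \<open>Matrices indexed by a finite set\<close>

definition hermitian_on :: "'a set \<Rightarrow> ('a \<Rightarrow> 'a \<Rightarrow> complex) \<Rightarrow> bool" where
  "hermitian_on I M \<longleftrightarrow> (\<forall>i\<in>I. \<forall>j\<in>I. M i j = cnj (M j i))"

definition quad_form :: "'a set \<Rightarrow> ('a \<Rightarrow> 'a \<Rightarrow> complex) \<Rightarrow> ('a \<Rightarrow> complex) \<Rightarrow> complex" where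
  "quad_form I M x = (\<Sum>i\<in>I. \<Sum>j\<in>I. cnj (x i) * M i j * x j)"

definition psd_on :: "'a set \<Rightarrow> ('a \<Rightarrow> 'a \<Rightarrow> complex) \<Rightarrow> bool" where
  "psd_on I M \<longleftrightarrow> hermitian_on I M \<and> (\<forall>x. 0 \<le> Re (quad_form I M x))"

definition irreducible_on :: "'a set \<Rightarrow> ('a \<Rightarrow> 'a \<Rightarrow> complex) \<Rightarrow> bool" where
  "irreducible_on I M \<longleftrightarrow>
     (\<forall>S. S \<subseteq> I \<longrightarrow> S \<noteq> {} \<longrightarrow> S \<noteq> I \<longrightarrow> (\<exists>i\<in>S. \<exists>j\<in>I - S. M i j \<noteq> 0))"

definition sector_offdiag :: "real \<Rightarrow> 'a set \<Rightarrow> ('a \<Rightarrow> 'a \<Rightarrow> complex) \<Rightarrow> bool" where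
  "sector_offdiag t I M \<longleftrightarrow> (\<forall>i\<in>I. \<forall>j\<in>I. i \<noteq> j \<longrightarrow> sector t (- M i j))"

definition in_kernel :: "'a set \<Rightarrow> ('a \<Rightarrow> 'a \<Rightarrow> complex) \<Rightarrow> ('a \<Rightarrow> complex) \<Rightarrow> bool" where
  "in_kernel I M x \<longleftrightarrow> (\<forall>i\<in>I. (\<Sum>j\<in>I. M i j * x j) = 0)"

lemma quad_form_eq_sum_row:
  "quad_form I M x = (\<Sum>i\<in>I. cnj (x i) * (\<Sum>j\<in>I. M i j * x j))"
  unfolding quad_form_def by (simp add: sum_distrib_left mult.assoc)

lemma sum_two_point:
  fixes f :: "'a \<Rightarrow> 'b::comm_monoid_add"
  assumes "finite I" "k \<in> I" "j \<in> I" "k \<noteq> j" "\<And>i. i \<in> I \<Longrightarrow> i \<noteq> k \<Longrightarrow> i \<noteq> j \<Longrightarrow> f i = 0"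
  shows "(\<Sum>i\<in>I. f i) = f k + f j"
proof -
  have "(\<Sum>i\<in>I. f i) = (\<Sum>i\<in>{k, j}. f i)"
    by (rule sum.mono_neutral_right) (use assms in auto)
  then show ?thesis using assms(4) by simp
qed

lemma quad_form_two_point:
  assumes "finite I" "k \<in> I" "j \<in> I" "k \<noteq> j"
  shows "quad_form I M (\<lambda>i. if i = k then 1 else if i = j then s else 0)
           = M k k + s * M k j + cnj s * M j k + cnj s * s * M j j"
proof -
  let ?x = "\<lambda>i. if i = k then 1 else if i = j then s else 0"
  have row: "(\<Sum>l\<in>I. M i l * ?x l) = M i k + s * M i j" for i
    by (subst sum_two_point[of I k j]) (use assms in auto)
  show ?thesis
    unfolding quad_form_eq_sum_row row
    by (subst sum_two_point[of I k j]) (use assms in \<open>auto simp: algebra_simps\<close>)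
qed

lemma psd_on_diag_pos:
  assumes "finite I" "psd_on I M" "k \<in> I" "j \<in> I" "j \<noteq> k" "M k j \<noteq> 0"
  shows "M k k = of_real (Re (M k k)) \<and> 0 < Re (M k k)"
proof -
  have herm: "hermitian_on I M" and psd: "\<And>x. 0 \<le> Re (quad_form I M x)"
    using assms(2) by (auto simp: psd_on_def)
  have "Im (M k k) = 0"
    using herm assms(3) unfolding hermitian_on_def by (metis cnj.sel(2) neg_equal_zero)
  then have real: "M k k = of_real (Re (M k k))" by (simp add: complex_eq_iff)
  have M_jk: "M j k = cnj (M k j)" using herm assms(3,4) unfolding hermitian_on_def by blast
  define c where "c = (cmod (M k j))\<^sup>2"
  define b where "b = Re (M j j)"
  define r where "r = 1 / (\<bar>b\<bar> + 1)"
  have "0 < c" "0 < r" using assms(6) by (simp_all add: c_def r_def add_pos_nonneg)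
  have "r * b < 1"
    using \<open>0 < r\<close> mult_left_mono[of b "\<bar>b\<bar>" r] by (simp add: r_def field_simps)
  \<comment> \<open>along \<open>x\<close> the entry \<open>M k j\<close> makes the form decrease to first order in \<open>r\<close>\<close>
  define x where "x = (\<lambda>i. if i = k then 1 else if i = j then - of_real r * cnj (M k j) else 0)"
  have "Re (quad_form I M x)
          = Re (M k k) - 2 * r * c + r * r * c * b"
    unfolding x_def quad_form_two_point[OF assms(1,3,4) assms(5)[symmetric]] M_jk c_def cmod_power2 b_def
    by (simp add: power2_eq_square algebra_simps)
  then have "r * c * (2 - r * b) \<le> Re (M k k)"
    using psd[of x] by (simp add: algebra_simps)
  moreover have "0 < r * c * (2 - r * b)"
    using \<open>0 < c\<close> \<open>0 < r\<close> \<open>r * b < 1\<close> by simp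
  ultimately show ?thesis using real by simp
qed

section \<open>Schur complement\<close>

definition schur_complement :: "('a \<Rightarrow> 'a \<Rightarrow> complex) \<Rightarrow> 'a \<Rightarrow> 'a \<Rightarrow> 'a \<Rightarrow> complex" where
  "schur_complement M k i j = M i j - M i k * M k j / M k k"

lemma schur_complement_row_sum:
  "(\<Sum>j\<in>J. schur_complement M k i j * y j)
     = (\<Sum>j\<in>J. M i j * y j) - M i k * (\<Sum>j\<in>J. M k j * y j) / M k k"
  unfolding schur_complement_def
  by (simp add: sum_subtractf sum_distrib_left sum_divide_distrib algebra_simps)

lemma hermitian_on_schur_complement:
  assumes "hermitian_on I M" "k \<in> I" "M k k \<in> \<real>"
  shows "hermitian_on (I - {k}) (schur_complement M k)"
  unfolding hermitian_on_def
proof (intro ballI)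
  fix i j assume "i \<in> I - {k}" "j \<in> I - {k}"
  then have "cnj (M j i) = M i j" "cnj (M j k) = M k j" "cnj (M k i) = M i k"
    using assms(1,2) unfolding hermitian_on_def by (metis DiffD1)+
  moreover have "cnj (M k k) = M k k" using assms(3) by (simp add: Reals_cnj_iff)
  ultimately show "schur_complement M k i j = cnj (schur_complement M k j i)"
    by (simp add: schur_complement_def mult.commute)
qed

lemma schur_complement_pivot_row:
  assumes "M k k \<noteq> 0"
  shows "schur_complement M k k j = 0"
  using assms by (simp add: schur_complement_def)

text \<open>The value chosen for \<open>x k\<close> annihilates row \<open>k\<close> of \<open>M x\<close>.\<close>
lemma quad_form_schur_complement:
  fixes y :: "'a \<Rightarrow> complex"
  assumes "finite I" "k \<in> I" "M k k \<noteq> 0"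
  defines "x \<equiv> y(k := - (\<Sum>j\<in>I - {k}. M k j * y j) / M k k)"
  shows "quad_form I M x = quad_form (I - {k}) (schur_complement M k) y"
proof -
  have x: "x j = y j" if "j \<in> I - {k}" for j
    using that by (simp add: x_def)
  have row: "(\<Sum>j\<in>I. M i j * x j) = (\<Sum>j\<in>I - {k}. schur_complement M k i j * y j)" for i
  proof -
    have "(\<Sum>j\<in>I - {k}. M i j * x j) = (\<Sum>j\<in>I - {k}. M i j * y j)"
      by (rule sum.cong) (simp_all add: x)
    moreover have "x k = - (\<Sum>j\<in>I - {k}. M k j * y j) / M k k"
      by (simp add: x_def)
    ultimately show ?thesis
      by (simp add: sum.remove[OF assms(1,2), of "\<lambda>j. M i j * x j"] schur_complement_row_sum)
  qed
  have "quad_form I M x = (\<Sum>i\<in>I. cnj (x i) * (\<Sum>j\<in>I - {k}. schur_complement M k i j * y j))"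
    by (simp add: quad_form_eq_sum_row row)
  also have "\<dots> = (\<Sum>i\<in>I - {k}. cnj (y i) * (\<Sum>j\<in>I - {k}. schur_complement M k i j * y j))"
    using assms(3) by (auto simp: sum.remove[OF assms(1,2)] schur_complement_pivot_row x intro!: sum.cong)
  also have "\<dots> = quad_form (I - {k}) (schur_complement M k) y"
    by (rule quad_form_eq_sum_row[symmetric])
  finally show ?thesis .
qed

lemma psd_on_schur_complement:
  assumes "finite I" "psd_on I M" "k \<in> I" "M k k \<noteq> 0" "M k k \<in> \<real>"
  shows "psd_on (I - {k}) (schur_complement M k)"
  unfolding psd_on_def
proof (intro conjI allI)
  show "hermitian_on (I - {k}) (schur_complement M k)"
    using assms(2,3,5) by (simp add: psd_on_def hermitian_on_schur_complement)
  show "0 \<le> Re (quad_form (I - {k}) (schur_complement M k) y)" for y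
    using assms(2)
    by (simp add: psd_on_def flip: quad_form_schur_complement[where I=I and k=k and M=M, OF assms(1,3,4)])
qed

lemma in_kernel_schur_complement:
  assumes "finite I" "k \<in> I" "M k k \<noteq> 0" "in_kernel I M x"
  shows "x k = - (\<Sum>j\<in>I - {k}. M k j * x j) / M k k"
    and "in_kernel (I - {k}) (schur_complement M k) x"
proof -
  have row: "M i k * x k + (\<Sum>j\<in>I - {k}. M i j * x j) = 0" if "i \<in> I" for i
    using assms(4) that by (simp add: in_kernel_def sum.remove[OF assms(1,2)])
  show xk: "x k = - (\<Sum>j\<in>I - {k}. M k j * x j) / M k k"
    using row[OF assms(2)] assms(3) by (simp add: field_simps add_eq_0_iff)
  show "in_kernel (I - {k}) (schur_complement M k) x"
    unfolding in_kernel_def using row xk by (simp add: schur_complement_row_sum)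
qed

lemma neg_schur_complement:
  "- schur_complement M k i j = - M i j + (- M i k) * (- M k j) / M k k"
  by (simp add: schur_complement_def)

text \<open>Both summands of \<open>- schur_complement M k i j\<close> lie in the doubled sector, which is still
  contained in the right half plane, so they cannot cancel.\<close>
lemma sector_schur_complement_summands:
  assumes "sector_offdiag t I M" "0 < t" "2 * t \<le> pi/2" "k \<in> I" "M k k = of_real d" "0 < d"
    and "i \<in> I - {k}" "j \<in> I - {k}" "i \<noteq> j"
  shows "sector (2 * t) (- M i j)" and "sector (2 * t) ((- M i k) * (- M k j) / M k k)"
proof -
  have "sector t (- M i j)" "sector t (- M i k)" "sector t (- M k j)"
    using assms(1,4,7-9) unfolding sector_offdiag_def by auto
  moreover have "t \<le> pi/2" using assms(2,3) by simp
  ultimately have "sector (2 * t) ((- M i k) * (- M k j))"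
    by (intro sector_mult)
  then show "sector (2 * t) ((- M i k) * (- M k j) / M k k)"
    unfolding assms(5) using assms(6) by (rule sector_divide_pos)
  show "sector (2 * t) (- M i j)"
    using sector_mono[OF \<open>sector t (- M i j)\<close>, of "2 * t"] assms(2) by simp
qed

lemma sector_offdiag_schur_complement:
  assumes "sector_offdiag t I M" "0 < t" "2 * t \<le> pi/2" "k \<in> I" "M k k = of_real d" "0 < d"
  shows "sector_offdiag (2 * t) (I - {k}) (schur_complement M k)"
  unfolding sector_offdiag_def
proof (intro ballI impI)
  fix i j assume "i \<in> I - {k}" "j \<in> I - {k}" "i \<noteq> j"
  then show "sector (2 * t) (- schur_complement M k i j)"
    unfolding neg_schur_complement using sector_schur_complement_summands[OF assms] assms(2,3)
    by (intro sector_add) simp_all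
qed

lemma schur_complement_eq_0_imp:
  assumes "sector_offdiag t I M" "0 < t" "2 * t \<le> pi/2" "k \<in> I" "M k k = of_real d" "0 < d"
    and "i \<in> I - {k}" "j \<in> I - {k}" "i \<noteq> j" "schur_complement M k i j = 0"
  shows "M i j = 0 \<and> M i k * M k j = 0"
proof -
  have "- M i j + (- M i k) * (- M k j) / M k k = 0"
    using assms(10) neg_schur_complement[of M k i j] by simp
  moreover have "2 * t > 0" using assms(2) by simp
  ultimately have "- M i j = 0 \<and> (- M i k) * (- M k j) / M k k = 0"
    using sector_add_eq_0_iff[OF _ assms(3) sector_schur_complement_summands[OF assms(1-9)]] by blast
  then show ?thesis using assms(5,6) by simp
qed

text \<open>An edge \<open>i \<rightarrow> k \<rightarrow> j\<close> through the pivot survives as the edge \<open>i \<rightarrow> j\<close> of the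
  Schur complement, so deleting the pivot keeps the graph of nonzero entries connected.\<close>
lemma irreducible_on_schur_complement:
  assumes "irreducible_on I M" "k \<in> I"
    and no_cancel: "\<And>i j. i \<in> I - {k} \<Longrightarrow> j \<in> I - {k} \<Longrightarrow> i \<noteq> j \<Longrightarrow> schur_complement M k i j = 0 \<Longrightarrow>
          M i j = 0 \<and> M i k * M k j = 0"
  shows "irreducible_on (I - {k}) (schur_complement M k)"
  unfolding irreducible_on_def
proof (intro allI impI)
  fix S assume S: "S \<subseteq> I - {k}" "S \<noteq> {}" "S \<noteq> I - {k}"
  have edge: "\<exists>i\<in>S. \<exists>j\<in>I - {k} - S. schur_complement M k i j \<noteq> 0"
    if "i \<in> S" "j \<in> I - {k} - S" "M i j \<noteq> 0 \<or> M i k * M k j \<noteq> 0" for i j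
    using that no_cancel[of i j] S(1) by blast
  have "S \<subseteq> I" "S \<noteq> I" using S assms(2) by auto
  then obtain i j where ij: "i \<in> S" "j \<in> I - S" "M i j \<noteq> 0"
    using assms(1) S(2) unfolding irreducible_on_def by blast
  show "\<exists>i\<in>S. \<exists>j\<in>I - {k} - S. schur_complement M k i j \<noteq> 0"
  proof (cases "j = k")
    case False
    then show ?thesis using edge ij by blast
  next
    case True
    have "insert k S \<subseteq> I" "insert k S \<noteq> I" using S assms(2) by auto
    then obtain i' j' where ij': "i' \<in> insert k S" "j' \<in> I - insert k S" "M i' j' \<noteq> 0"
      using assms(1) unfolding irreducible_on_def by blast
    then show ?thesis
      using edge[of i' j'] edge[of i j'] ij True by (cases "i' = k") auto
  qed
qed

lemma schur_complement_step:
  assumes "finite I" "psd_on I M" "irreducible_on I M" "sector_offdiag t I M"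
    and "0 < t" "2 * t \<le> pi / 2" "k \<in> I" "j \<in> I - {k}" "M k j \<noteq> 0"
  shows "M k k \<noteq> 0" and "psd_on (I - {k}) (schur_complement M k)"
    and "irreducible_on (I - {k}) (schur_complement M k)"
    and "sector_offdiag (2 * t) (I - {k}) (schur_complement M k)"
proof -
  have pivot: "M k k = of_real (Re (M k k))" "0 < Re (M k k)"
    using psd_on_diag_pos[OF assms(1,2,7)] assms(8,9) by auto
  then show "M k k \<noteq> 0" by (metis of_real_eq_0_iff order.irrefl)
  moreover have "M k k \<in> \<real>" using pivot(1) by (metis Reals_of_real)
  ultimately show "psd_on (I - {k}) (schur_complement M k)"
    using psd_on_schur_complement[OF assms(1,2,7)] by blast
  show "irreducible_on (I - {k}) (schur_complement M k)"
    using irreducible_on_schur_complement[OF assms(3,7)]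
      schur_complement_eq_0_imp[OF assms(4-7) pivot] by blast
  show "sector_offdiag (2 * t) (I - {k}) (schur_complement M k)"
    by (rule sector_offdiag_schur_complement[OF assms(4-7) pivot])
qed

text \<open>The pivot coordinate of a kernel vector is a linear function of the others.\<close>
lemma in_kernel_relation_extend:
  assumes "finite I" "k \<in> I" "M k k \<noteq> 0" "in_kernel I M x" "in_kernel I M y"
    and "\<forall>i\<in>I - {k}. a * x i + b * y i = 0"
  shows "\<forall>i\<in>I. a * x i + b * y i = 0"
proof -
  have "a * x k + b * y k = - (\<Sum>j\<in>I - {k}. M k j * (a * x j + b * y j)) / M k k"
    unfolding in_kernel_schur_complement(1)[OF assms(1-4)] in_kernel_schur_complement(1)[OF assms(1-3,5)]
    using assms(3) by (simp add: field_simps sum_distrib_left sum.distrib)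
  also have "\<dots> = 0" using assms(6) by simp
  finally show ?thesis using assms(6) by blast
qed

text \<open>Each elimination step doubles the admissible sector, hence the bound \<open>\<pi> / 2 ^ card I\<close>.\<close>
lemma in_kernel_dependent:
  assumes "finite I" "psd_on I M" "irreducible_on I M" "sector_offdiag (pi / 2 ^ card I) I M"
    and "in_kernel I M x" "in_kernel I M y"
  shows "\<exists>a b. (a \<noteq> 0 \<or> b \<noteq> 0) \<and> (\<forall>i\<in>I. a * x i + b * y i = 0)"
  using assms
proof (induction "card I" arbitrary: I M x y)
  case 0
  then show ?case by auto
next
  case (Suc c)
  then obtain k where k: "k \<in> I" by fastforce
  show ?case
  proof (cases "c = 0")
    case True
    then have "I = {k}" using Suc.hyps(2) k by (metis One_nat_def card_1_singletonE singletonD)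
    show ?thesis
    proof (cases "x k = 0 \<and> y k = 0")
      case True
      then show ?thesis using \<open>I = {k}\<close> by (intro exI[of _ 1] exI[of _ 0]) auto
    next
      case False
      then show ?thesis using \<open>I = {k}\<close>
        by (intro exI[of _ "y k"] exI[of _ "- x k"]) (auto simp: algebra_simps)
    qed
  next
    case False
    define t where "t = pi / 2 ^ Suc c"
    have "2 * t = pi / 2 ^ c" "0 < t" by (simp_all add: t_def)
    have "(2::real) ^ 1 \<le> 2 ^ c" using False by (intro power_increasing) auto
    then have "2 * t * 2 \<le> 2 * t * 2 ^ c" using \<open>0 < t\<close> by simp
    also have "\<dots> = pi" using \<open>2 * t = pi / 2 ^ c\<close> by simp
    finally have "2 * t \<le> pi / 2" by simp
    have "{k} \<subseteq> I" "{k} \<noteq> I" using k Suc.hyps(2) False by auto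
    then obtain j where "j \<in> I - {k}" "M k j \<noteq> 0"
      using Suc.prems(3) unfolding irreducible_on_def by blast
    have "sector_offdiag t I M" using Suc.prems(4) Suc.hyps(2) by (simp add: t_def)
    note step = schur_complement_step[OF Suc.prems(1-3) this \<open>0 < t\<close> \<open>2 * t \<le> pi / 2\<close> k
        \<open>j \<in> I - {k}\<close> \<open>M k j \<noteq> 0\<close>]
    have card: "c = card (I - {k})" and fin: "finite (I - {k})"
      using Suc.hyps(2) Suc.prems(1) k by auto
    have sector: "sector_offdiag (pi / 2 ^ card (I - {k})) (I - {k}) (schur_complement M k)"
      using step(4) \<open>2 * t = pi / 2 ^ c\<close> card by simp
    obtain a b where "a \<noteq> 0 \<or> b \<noteq> 0" "\<forall>i\<in>I - {k}. a * x i + b * y i = 0"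
      using Suc.hyps(1)[OF card fin step(2,3) sector
          in_kernel_schur_complement(2)[OF Suc.prems(1) k step(1) Suc.prems(5)]
          in_kernel_schur_complement(2)[OF Suc.prems(1) k step(1) Suc.prems(6)]] by blast
    then show ?thesis
      using in_kernel_relation_extend[OF Suc.prems(1) k step(1) Suc.prems(5,6)] by blast
  qed
qed

section \<open>Rank and irreducibility of matrices of type \<open>'a^'n^'m\<close>\<close>

lemma vector_matrix_mult_eq_sum_rows:
  fixes M :: "'a::comm_semiring_1^'n^'m"
  shows "c v* M = (\<Sum>i\<in>UNIV. c $ i *s row i M)"
  by (simp add: vec_eq_iff vector_matrix_mult_def row_def)

lemma inj_on_row_if_left_kernel_coordinate:
  fixes M :: "'a::field^'n^'m"
  assumes "\<And>c. c v* M = 0 \<Longrightarrow> c $ k = 0 \<Longrightarrow> c = 0"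
  shows "inj_on (\<lambda>i. row i M) (UNIV - {k})"
proof (rule inj_onI, rule ccontr)
  fix i j assume "i \<in> UNIV - {k}" "j \<in> UNIV - {k}" "row i M = row j M" "i \<noteq> j"
  have "axis l 1 v* M = M $ l" for l
    by (simp add: vec_eq_iff vector_matrix_mult_def axis_def if_distrib[of "\<lambda>x. x * _"] cong: if_cong)
  moreover have "M $ i = M $ j" using \<open>row i M = row j M\<close> by (simp add: row_def)
  ultimately have "(axis i 1 - axis j 1) v* M = 0"
    by (simp add: vector_matrix_mult_diff_distrib)
  moreover have "(axis i 1 - axis j 1 :: 'a^'m) $ k = 0"
    using \<open>i \<in> UNIV - {k}\<close> \<open>j \<in> UNIV - {k}\<close> by (simp add: axis_def)
  ultimately have "axis i 1 - axis j 1 = (0 :: 'a^'m)"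
    by (rule assms)
  then have "(axis i 1 - axis j 1 :: 'a^'m) $ i = 0" by simp
  then show False using \<open>i \<noteq> j\<close> by (simp add: axis_def)
qed

text \<open>The rows other than row \<open>k\<close> are linearly independent.\<close>
lemma rank_ge_card_minus_1:
  fixes M :: "'a::field^'n^'m"
  assumes "\<And>c. c v* M = 0 \<Longrightarrow> c $ k = 0 \<Longrightarrow> c = 0"
  shows "CARD('m) - 1 \<le> rank M"
proof -
  note inj = inj_on_row_if_left_kernel_coordinate[OF assms]
  define R where "R = (\<lambda>i. row i M) ` (UNIV - {k})"
  have "vec.independent R"
  proof (subst vec.dependent_finite)
    show "finite R" by (simp add: R_def)
    show "\<not> (\<exists>u. (\<exists>v\<in>R. u v \<noteq> 0) \<and> (\<Sum>v\<in>R. u v *s v) = 0)"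
    proof safe
      fix u v assume sum: "(\<Sum>v\<in>R. u v *s v) = 0" and "v \<in> R" "u v \<noteq> 0"
      define c where "c = (\<chi> i. if i = k then 0 else u (row i M))"
      have "c v* M = (\<Sum>i\<in>UNIV - {k}. u (row i M) *s row i M)"
        by (auto simp: vector_matrix_mult_eq_sum_rows sum.remove[of UNIV k] c_def intro!: sum.cong)
      also have "\<dots> = 0"
        using sum by (simp add: R_def sum.reindex[OF inj])
      finally have "c = 0" using assms by (simp add: c_def)
      obtain i where "i \<noteq> k" "v = row i M" using \<open>v \<in> R\<close> by (auto simp: R_def)
      then have "c $ i = u v" by (simp add: c_def)
      then show False using \<open>c = 0\<close> \<open>u v \<noteq> 0\<close> by simp
    qed
  qed
  moreover have "R \<subseteq> rows M" by (auto simp: R_def rows_def)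
  ultimately have "card R \<le> vec.dim (rows M)" by (intro vec.independent_card_le_dim)
  moreover have "card R = CARD('m) - 1"
    by (simp add: R_def card_image[OF inj] card_Diff_subset)
  ultimately show ?thesis by (simp add: row_rank_def_gen)
qed

lemma ex_coordinate_determining:
  fixes K :: "('a::field^'n) set"
  assumes "\<And>v w. v \<in> K \<Longrightarrow> w \<in> K \<Longrightarrow> \<exists>a b. (a \<noteq> 0 \<or> b \<noteq> 0) \<and> a *s v + b *s w = 0"
  shows "\<exists>k. \<forall>w\<in>K. w $ k = 0 \<longrightarrow> w = 0"
proof (cases "K \<subseteq> {0}")
  case False
  then obtain z where "z \<in> K" "z \<noteq> 0" by blast
  then obtain k where "z $ k \<noteq> 0" by (auto simp: vec_eq_iff)
  have "w = 0" if "w \<in> K" "w $ k = 0" for w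
  proof -
    obtain a b where "a \<noteq> 0 \<or> b \<noteq> 0" "a *s z + b *s w = 0"
      using assms \<open>z \<in> K\<close> \<open>w \<in> K\<close> by blast
    moreover from this(2) have "(a *s z + b *s w) $ k = 0" by simp
    then have "a * z $ k = 0" using \<open>w $ k = 0\<close> by simp
    ultimately show "w = 0" using \<open>z $ k \<noteq> 0\<close> by (auto simp: vec_eq_iff)
  qed
  then show ?thesis by blast
qed auto

lemma hermitian_vector_matrix_mult_eq_0_iff:
  fixes M :: "complex^'n^'n"
  assumes "hermitian_mat M"
  shows "c v* M = 0 \<longleftrightarrow> M *v (\<chi> i. cnj (c $ i)) = 0"
proof -
  have herm: "M $ j $ i = cnj (M $ i $ j)" for i j
    using assms unfolding hermitian_mat_def by blast
  have "(M *v (\<chi> i. cnj (c $ i))) $ j = cnj ((c v* M) $ j)" for j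
    unfolding matrix_vector_mult_def vector_matrix_mult_def
    by (simp add: mult.commute) (subst herm, rule refl)
  then show ?thesis by (simp add: vec_eq_iff)
qed

lemma ex_enumeration_initial_segment:
  fixes S :: "'n::finite set"
  obtains \<tau> where "bij_betw \<tau> {0..<CARD('n)} UNIV"
    and "\<And>p. p < CARD('n) \<Longrightarrow> \<tau> p \<in> S \<longleftrightarrow> p < card S"
proof -
  define a where "a = card S"
  have "a \<le> CARD('n)" by (simp add: a_def card_mono)
  obtain f where f: "bij_betw f {0..<a} S"
    using finite_same_card_bij[of "{0..<a}" S] by (auto simp: a_def)
  have "card (UNIV - S) = card {a..<CARD('n)}" by (simp add: a_def card_Diff_subset)
  then obtain g where g: "bij_betw g {a..<CARD('n)} (UNIV - S)"
    using finite_same_card_bij[of "{a..<CARD('n)}" "UNIV - S"] by auto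
  define \<tau> where "\<tau> p = (if p < a then f p else g p)" for p
  have "bij_betw \<tau> {0..<a} S"
    using f by (rule bij_betw_cong[THEN iffD1, rotated]) (simp add: \<tau>_def)
  moreover have "bij_betw \<tau> {a..<CARD('n)} (UNIV - S)"
    using g by (rule bij_betw_cong[THEN iffD1, rotated]) (simp add: \<tau>_def)
  ultimately have "bij_betw \<tau> ({0..<a} \<union> {a..<CARD('n)}) (S \<union> (UNIV - S))"
    by (rule bij_betw_combine) auto
  moreover have "{0..<a} \<union> {a..<CARD('n)} = {0..<CARD('n)}" using \<open>a \<le> CARD('n)\<close> by auto
  ultimately have "bij_betw \<tau> {0..<CARD('n)} UNIV" by simp
  moreover have "\<tau> p \<in> S \<longleftrightarrow> p < a" if "p < CARD('n)" for p
    using that bij_betwE[OF \<open>bij_betw \<tau> {0..<a} S\<close>] bij_betwE[OF \<open>bij_betw \<tau> {a..<CARD('n)} (UNIV - S)\<close>]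
    by (cases "p < a") auto
  ultimately show ?thesis using that by (simp add: a_def)
qed

text \<open>Listing \<open>S\<close> first exhibits the two diagonal blocks \<open>S\<close> and its complement.\<close>
lemma reducible_matI:
  fixes M :: "'a::zero^'n^'n"
  assumes "S \<noteq> {}" "S \<noteq> UNIV"
    and "\<And>i j. i \<in> S \<Longrightarrow> j \<notin> S \<Longrightarrow> M $ i $ j = 0 \<and> M $ j $ i = 0"
  shows "reducible_mat M"
proof -
  obtain \<tau> where \<tau>: "bij_betw \<tau> {0..<CARD('n)} UNIV"
    and in_S: "\<And>p. p < CARD('n) \<Longrightarrow> \<tau> p \<in> S \<longleftrightarrow> p < card S"
    using ex_enumeration_initial_segment[of S] by blast
  have "0 < card S" "card S < CARD('n)"
    using assms(1,2) by (auto simp: card_gt_0_iff psubsetI psubset_card_mono)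
  define blk :: "nat \<Rightarrow> nat" where "blk p = (if p < card S then 0 else 1)" for p
  have "blk ` {0..<CARD('n)} = {0..<2}"
  proof -
    have "0 \<in> {0..<CARD('n)}" "card S \<in> {0..<CARD('n)}"
      using \<open>card S < CARD('n)\<close> by auto
    then have "blk 0 \<in> blk ` {0..<CARD('n)}" "blk (card S) \<in> blk ` {0..<CARD('n)}"
      by blast+
    moreover have "blk 0 = 0" "blk (card S) = 1" using \<open>0 < card S\<close> by (simp_all add: blk_def)
    moreover have "blk ` {0..<CARD('n)} \<subseteq> {0, 1}" by (auto simp: blk_def)
    moreover have "{0..<2::nat} = {0, 1}" by auto
    ultimately show ?thesis by auto
  qed
  moreover have "M $ \<tau> p $ \<tau> q = 0"
    if "p < CARD('n)" "q < CARD('n)" "blk p \<noteq> blk q" for p q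
    using that assms(3) in_S by (cases "p < card S"; cases "q < card S") (auto simp: blk_def)
  ultimately show ?thesis
    unfolding reducible_mat_def using \<tau>
    by (intro exI[of _ \<tau>] exI[of _ blk] exI[of _ 2]) (auto simp: blk_def)
qed

lemma irreducible_on_irreducible_mat:
  fixes M :: "complex^'n^'n"
  assumes "hermitian_mat M" "irreducible_mat M"
  shows "irreducible_on UNIV (\<lambda>i j. M $ i $ j)"
  unfolding irreducible_on_def
proof (intro allI impI, rule ccontr)
  fix S :: "'n set"
  assume S: "S \<noteq> {}" "S \<noteq> UNIV" and no_edge: "\<not> (\<exists>i\<in>S. \<exists>j\<in>UNIV - S. M $ i $ j \<noteq> 0)"
  have "M $ i $ j = 0 \<and> M $ j $ i = 0" if "i \<in> S" "j \<notin> S" for i j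
  proof -
    have "M $ i $ j = 0" using no_edge that by blast
    moreover have "M $ j $ i = cnj (M $ i $ j)"
      using assms(1) unfolding hermitian_mat_def by blast
    ultimately show ?thesis by simp
  qed
  then have "reducible_mat M" using S by (intro reducible_matI[of S])
  then show False using assms(2) by (simp add: irreducible_mat_def)
qed

lemma psd_on_psd_mat:
  assumes "psd_mat M"
  shows "psd_on UNIV (\<lambda>i j. M $ i $ j)"
  unfolding psd_on_def
proof (intro conjI allI)
  show "hermitian_on UNIV (\<lambda>i j. M $ i $ j)"
    using assms unfolding psd_mat_def hermitian_mat_def hermitian_on_def by blast
  show "0 \<le> Re (quad_form UNIV (\<lambda>i j. M $ i $ j) x)" for x
  proof -
    have "0 \<le> Re (\<Sum>i\<in>UNIV. \<Sum>j\<in>UNIV. cnj (vec_lambda x $ i) * M $ i $ j * vec_lambda x $ j)"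
      using assms unfolding psd_mat_def by blast
    then show ?thesis by (simp add: quad_form_def)
  qed
qed

lemma in_kernel_iff_matrix_vector_mult_eq_0:
  "in_kernel UNIV (\<lambda>i j. M $ i $ j) (\<lambda>i. w $ i) \<longleftrightarrow> M *v w = 0"
  by (simp add: in_kernel_def matrix_vector_mult_def vec_eq_iff)

lemma kernel_vectors_dependent:
  fixes M :: "complex^'n^'n"
  assumes "psd_mat M" "irreducible_mat M" "sector_offdiag (pi / 2 ^ CARD('n)) UNIV (\<lambda>i j. M $ i $ j)"
    and "M *v v = 0" "M *v w = 0"
  shows "\<exists>a b. (a \<noteq> 0 \<or> b \<noteq> 0) \<and> a *s v + b *s w = 0"
proof -
  have "hermitian_mat M" using assms(1) by (simp add: psd_mat_def)
  then obtain a b where "a \<noteq> 0 \<or> b \<noteq> 0" "\<forall>i. a * v $ i + b * w $ i = 0"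
    using in_kernel_dependent[OF finite_class.finite_UNIV psd_on_psd_mat[OF assms(1)]
        irreducible_on_irreducible_mat[OF _ assms(2)] _, of "\<lambda>i. v $ i" "\<lambda>i. w $ i"] assms(3-5)
    unfolding in_kernel_iff_matrix_vector_mult_eq_0 by auto
  then show ?thesis by (intro exI[of _ a] exI[of _ b]) (simp add: vec_eq_iff)
qed

theorem lemma5:
  fixes M :: "complex^'n^'n"
  assumes "psd_mat M"
    and "irreducible_mat M"
    and "\<And>i j. i \<noteq> j \<Longrightarrow> M $ i $ j \<noteq> 0 \<Longrightarrow>
           - pi / 2 ^ CARD('n) < Arg (- (M $ i $ j)) \<and> Arg (- (M $ i $ j)) < pi / 2 ^ CARD('n)"
  shows "rank M \<ge> CARD('n) - 1"
proof -
  have herm: "hermitian_mat M" using assms(1) by (simp add: psd_mat_def)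
  have "sector_offdiag (pi / 2 ^ CARD('n)) UNIV (\<lambda>i j. M $ i $ j)"
    unfolding sector_offdiag_def sector_def by (auto simp: abs_less_iff dest: assms(3))
  then have "\<exists>k. \<forall>w\<in>{v. M *v v = 0}. w $ k = 0 \<longrightarrow> w = 0"
    using kernel_vectors_dependent[OF assms(1,2)] by (intro ex_coordinate_determining) simp
  then obtain k where k: "\<And>w. M *v w = 0 \<Longrightarrow> w $ k = 0 \<Longrightarrow> w = 0" by blast
  have "c = 0" if "c v* M = 0" "c $ k = 0" for c
  proof -
    have "M *v (\<chi> i. cnj (c $ i)) = 0"
      using hermitian_vector_matrix_mult_eq_0_iff[OF herm] that(1) by blast
    moreover have "(\<chi> i. cnj (c $ i)) $ k = 0" using that(2) by simp
    ultimately have "(\<chi> i. cnj (c $ i)) = 0" by (rule k)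
    then show ?thesis by (simp add: vec_eq_iff)
  qed
  then show ?thesis by (rule rank_ge_card_minus_1)
qed

end
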